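(* Let $k\geq3$ and let $G$ be a $k$-uniform hypergraph; if $k=3$ assume moreover that $G$ is $K_4^{(3)-}$-free. Let $\Pi=(P,\psi_\Pi)$ be a picture over $G$ with $P\subseteq[k]^m$, let $x\in V(G)$, put $\Pi_x=\psi_\Pi^{-1}(x)$, let $n\geq 1$, and let $\mathscr{L}$ be a collection of combinatorial lines in $(\Pi_x)^n$ containing neither tripods nor triangles. Then the amalgamation $\Pi\boxplus\mathscr{L}=(Q,\psi_\Sigma)$, with $Q=\bigcup_{U\in\mathscr{L}}\eta_U^+[P]\subseteq[k]^{mn}$ and $\psi_\Sigma=\bigcup_{U\in\mathscr{L}}\psi_\Pi\circ(\eta_U^+|_P)^{-1}$, is again a picture over $G$.
   Context: $K_4^{(3)-}$ is the 3-uniform hypergraph with four vertices and three edges. Combinatorial lines in $B^n$ for a finite alphabet $B$: sets $\{\eta(a)\colon a\in B\}$ where, for a partition $[n]=C\cup M$ with $M\neq\emptyset$ and $g\colon C\to B$, $\eta(a)$ has $i$-th coordinate $g(i)$ for $i\in C$ and $a$ for $i\in M$; $M$ is the set of moving coordinates of the line. A quasiline in $[k]^N$ is a $k$-element subset $L$ such that in every coordinate the entries of the points of $L$ are all identical or mutually distinct. A picture over $G$ is a pair $(P,\psi)$ with $P\subseteq[k]^m$ for some $m$ and $\psi\colon P\to V(G)$ such that every quasiline $L\subseteq P$ is a combinatorial line and $\psi[L]\in E(G)$. Three distinct lines form a triangle if any two intersect but they have no common point; three distinct lines $L,L',L''$ through a common point form a tripod if the moving coordinates of $L$ are the disjoint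 union of those of $L'$ and $L''$. $\Pi_x\subseteq[k]^m$ is viewed as an alphabet and $([k]^m)^n$ is identified with $[k]^{mn}$ by concatenating blocks. For $U\in\mathscr{L}$ with fixed representation $(C,M,g)$, $g\colon C\to\Pi_x$, the map $\eta_U^+\colon[k]^m\to[k]^{mn}$ sends $a$ to the tuple of blocks whose $c$-th block is $g(c)$ for $c\in C$ and whose $j$-th block is $a$ for $j\in M$. (The maps $\psi_\Pi\circ(\eta_U^+|_P)^{-1}$ agree on common points of their domains, so $\psi_\Sigma$ is a well-defined function $Q\to V(G)$.) *)

theory Defs
  imports Main
begin

text \<open>Points of B^n are lists of length n over the alphabet B; [k] = {1..k}.\<close>

definition cube :: "'b set \<Rightarrow> nat \<Rightarrow> 'b list set" where
  "cube B n = {p. length p = n \<and> set p \<subseteq> B}"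

definition line_pt :: "nat \<Rightarrow> nat set \<Rightarrow> (nat \<Rightarrow> 'b) \<Rightarrow> 'b \<Rightarrow> 'b list" where
  "line_pt n M g a = map (\<lambda>i. if i \<in> M then a else g i) [0..<n]"

definition line_rep :: "'b set \<Rightarrow> nat \<Rightarrow> nat set \<Rightarrow> (nat \<Rightarrow> 'b) \<Rightarrow> 'b list set \<Rightarrow> bool" where
  "line_rep B n M g U \<longleftrightarrow> M \<subseteq> {..<n} \<and> M \<noteq> {} \<and> (\<forall>i\<in>{..<n} - M. g i \<in> B)
     \<and> U = line_pt n M g ` B"

definition comb_line :: "'b set \<Rightarrow> nat \<Rightarrow> 'b list set \<Rightarrow> bool" where
  "comb_line B n U \<longleftrightarrow> (\<exists>M g. line_rep B n M g U)"

definition quasiline :: "nat \<Rightarrow> nat \<Rightarrow> nat list set \<Rightarrow> bool" where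
  "quasiline k N L \<longleftrightarrow> L \<subseteq> cube {1..k} N \<and> card L = k \<and>
     (\<forall>i<N. (\<forall>p\<in>L. \<forall>q\<in>L. p ! i = q ! i) \<or> inj_on (\<lambda>p. p ! i) L)"

definition uniform_hypergraph :: "nat \<Rightarrow> 'v set \<Rightarrow> 'v set set \<Rightarrow> bool" where
  "uniform_hypergraph k V E \<longleftrightarrow> (\<forall>e\<in>E. e \<subseteq> V \<and> card e = k)"

definition K4minus_free :: "'v set set \<Rightarrow> bool" where
  "K4minus_free E \<longleftrightarrow> \<not> (\<exists>S. card S = 4 \<and> 3 \<le> card {e\<in>E. e \<subseteq> S})"

definition picture :: "nat \<Rightarrow> 'v set \<Rightarrow> 'v set set \<Rightarrow> nat \<Rightarrow> nat list set \<Rightarrow> (nat list \<Rightarrow> 'v) \<Rightarrow> bool" where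
  "picture k V E m P psi \<longleftrightarrow> P \<subseteq> cube {1..k} m \<and> (\<forall>p\<in>P. psi p \<in> V) \<and>
     (\<forall>L. quasiline k m L \<and> L \<subseteq> P \<longrightarrow> comb_line {1..k} m L \<and> psi ` L \<in> E)"

definition eta_plus :: "nat \<Rightarrow> nat set \<Rightarrow> (nat \<Rightarrow> nat list) \<Rightarrow> nat list \<Rightarrow> nat list" where
  "eta_plus n M g a = concat (line_pt n M g a)"

definition no_tripod :: "'b list set set \<Rightarrow> ('b list set \<Rightarrow> nat set) \<Rightarrow> bool" where
  "no_tripod \<L> Mv \<longleftrightarrow> \<not> (\<exists>L1\<in>\<L>. \<exists>L2\<in>\<L>. \<exists>L3\<in>\<L>. L1 \<noteq> L2 \<and> L1 \<noteq> L3 \<and> L2 \<noteq> L3 \<and>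
      L1 \<inter> L2 \<inter> L3 \<noteq> {} \<and> Mv L1 = Mv L2 \<union> Mv L3 \<and> Mv L2 \<inter> Mv L3 = {})"

definition no_triangle :: "'b list set set \<Rightarrow> bool" where
  "no_triangle \<L> \<longleftrightarrow> \<not> (\<exists>L1\<in>\<L>. \<exists>L2\<in>\<L>. \<exists>L3\<in>\<L>. L1 \<noteq> L2 \<and> L1 \<noteq> L3 \<and> L2 \<noteq> L3 \<and>
      L1 \<inter> L2 \<noteq> {} \<and> L1 \<inter> L3 \<noteq> {} \<and> L2 \<inter> L3 \<noteq> {} \<and> L1 \<inter> L2 \<inter> L3 = {})"

text \<open>Amalgamation: Q and psi_Sigma (well-defined by the paper's remark; SOME picks the value).\<close>
definition amalg_Q :: "nat list set \<Rightarrow> nat \<Rightarrow> nat list list set set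
    \<Rightarrow> (nat list list set \<Rightarrow> nat set) \<Rightarrow> (nat list list set \<Rightarrow> nat \<Rightarrow> nat list) \<Rightarrow> nat list set" where
  "amalg_Q P n \<L> Mr gr = (\<Union>U\<in>\<L>. eta_plus n (Mr U) (gr U) ` P)"

definition amalg_psi :: "nat list set \<Rightarrow> (nat list \<Rightarrow> 'v) \<Rightarrow> nat \<Rightarrow> nat list list set set
    \<Rightarrow> (nat list list set \<Rightarrow> nat set) \<Rightarrow> (nat list list set \<Rightarrow> nat \<Rightarrow> nat list) \<Rightarrow> nat list \<Rightarrow> 'v" where
  "amalg_psi P psi n \<L> Mr gr q =
     (SOME v. \<exists>U\<in>\<L>. \<exists>p\<in>P. q = eta_plus n (Mr U) (gr U) p \<and> v = psi p)"

end

theory Submission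
  imports Defs
begin

text \<open>
  Cut the points of [k]^{mn} into n blocks of length m. Along a quasiline L \<subseteq> Q every block
  is either constant or injective, and an injective block maps L onto a quasiline of \<Pi>, hence
  onto a combinatorial line whose \<psi>-image is an edge; so at most one point of L has that block
  in the fibre \<Pi>_x. Writing each q \<in> L as \<eta>_{U_q}(p_q), this forces L into a single \<eta>_U[P].
  If some p_q lies in \<Pi>_x, all other points share U_q, and the remaining point is recovered from
  the block lines. Otherwise the injective blocks outside the moving set of U_q (the deficit
  of q) are disjoint for distinct q; three nonempty deficits give three edges on four vertices
  (k = 3) or two points of L with equal p_q and a common moving block (k \<ge> 4), and exactly two
  give a tripod or a triangle in \<L>. Finally L is the \<eta>_U-image of one of its moving blocks, a
  combinatorial line of \<Pi>; \<eta>_U maps combinatorial lines to combinatorial lines and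
  \<psi>_\<Sigma> \<circ> \<eta>_U = \<psi>.
\<close>

section \<open>Blocks and quasilines\<close>

definition block :: "nat \<Rightarrow> nat \<Rightarrow> 'a list \<Rightarrow> 'a list" where
  "block m j q = map (\<lambda>t. q ! (j * m + t)) [0..<m]"

lemma length_block [simp]: "length (block m j q) = m"
  by (simp add: block_def)

lemma nth_block [simp]: "t < m \<Longrightarrow> block m j q ! t = q ! (j * m + t)"
  by (simp add: block_def)

lemma block_index_less: "j < n \<Longrightarrow> t < m \<Longrightarrow> j * m + t < m * (n::nat)"
proof -
  assume "j < n" "t < m"
  then have "(j + 1) * m \<le> n * m" by (intro mult_le_mono1) simp
  with \<open>t < m\<close> show ?thesis by (simp add: algebra_simps)
qed

lemma length_concat_const:
  "\<forall>y\<in>set xs. length y = m \<Longrightarrow> length (concat xs) = length xs * m"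
  by (induction xs) auto

lemma block_concat:
  "\<forall>y\<in>set xs. length y = m \<Longrightarrow> j < length xs \<Longrightarrow> block m j (concat xs) = xs ! j"
proof (induction xs arbitrary: j)
  case (Cons y ys)
  then show ?case
    by (cases j) (auto simp: block_def nth_append intro!: nth_equalityI)
qed simp

lemma blocks_eqI:
  assumes "length q = m * n" "length q' = m * n" "\<And>j. j < n \<Longrightarrow> block m j q = block m j q'"
  shows "q = q'"
proof (rule nth_equalityI)
  fix i assume "i < length q"
  then have i: "i < m * n" using assms(1) by simp
  then have "m > 0" by (cases m) auto
  then have "i div m < n" "i mod m < m" "i = i div m * m + i mod m"
    using i by (auto simp: less_mult_imp_div_less mult.commute)
  then show "q ! i = q' ! i"
    using assms(3)[of "i div m"] nth_block[of "i mod m" m "i div m"] by metis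
qed (use assms in simp)

lemma block_in_cube: "q \<in> cube B (m * n) \<Longrightarrow> j < n \<Longrightarrow> block m j q \<in> cube B m"
  by (auto simp: cube_def block_def block_index_less)

lemma finite_cube: "finite B \<Longrightarrow> finite (cube B n)"
  unfolding cube_def using finite_lists_length_eq by (simp add: conj_commute)

lemma finite_quasiline: "quasiline k N L \<Longrightarrow> finite L"
  unfolding quasiline_def using finite_cube[of "{1..k}" N] finite_subset by blast

lemma quasiline_coord_const_or_inj:
  "quasiline k N L \<Longrightarrow> i < N \<Longrightarrow> (\<forall>p\<in>L. \<forall>q\<in>L. p ! i = q ! i) \<or> inj_on (\<lambda>p. p ! i) L"
  unfolding quasiline_def by blast

lemma quasiline_block_const_or_inj:
  assumes L: "quasiline k (m * n) L" and j: "j < n"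
  shows "(\<forall>q\<in>L. \<forall>q'\<in>L. block m j q = block m j q') \<or> inj_on (block m j) L"
proof (rule disjCI)
  assume "\<not> inj_on (block m j) L"
  then obtain q0 q0' where q0: "q0 \<in> L" "q0' \<in> L" "q0 \<noteq> q0'" "block m j q0 = block m j q0'"
    unfolding inj_on_def by blast
  have coord_eq: "q ! (j * m + t) = q' ! (j * m + t)" if "q \<in> L" "q' \<in> L" "t < m" for q q' t
  proof -
    have "q0 ! (j * m + t) = q0' ! (j * m + t)"
      using arg_cong[OF q0(4), of "\<lambda>p. p ! t"] \<open>t < m\<close> by simp
    then have "\<not> inj_on (\<lambda>p. p ! (j * m + t)) L"
      using q0 unfolding inj_on_def by blast
    then show ?thesis
      using quasiline_coord_const_or_inj[OF L block_index_less[OF j \<open>t < m\<close>]] that by blast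
  qed
  show "\<forall>q\<in>L. \<forall>q'\<in>L. block m j q = block m j q'"
  proof (intro ballI nth_equalityI)
    fix q q' t assume "q \<in> L" "q' \<in> L" "t < length (block m j q)"
    then show "block m j q ! t = block m j q' ! t" using coord_eq[of q q' t] by simp
  qed simp
qed

lemma quasiline_block:
  assumes L: "quasiline k (m * n) L" and j: "j < n" and inj: "inj_on (block m j) L"
  shows "quasiline k m (block m j ` L)"
  unfolding quasiline_def
proof (intro conjI allI impI)
  show "block m j ` L \<subseteq> cube {1..k} m"
    using L j block_in_cube unfolding quasiline_def by blast
  show "card (block m j ` L) = k"
    using L card_image[OF inj] unfolding quasiline_def by simp
  fix t assume t: "t < m"
  have coord: "(\<lambda>p. p ! t) \<circ> block m j = (\<lambda>q. q ! (j * m + t))"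
    using t by auto
  consider "\<forall>q\<in>L. \<forall>q'\<in>L. q ! (j * m + t) = q' ! (j * m + t)" | "inj_on (\<lambda>q. q ! (j * m + t)) L"
    using quasiline_coord_const_or_inj[OF L block_index_less[OF j t]] by blast
  then show "(\<forall>p\<in>block m j ` L. \<forall>p'\<in>block m j ` L. p ! t = p' ! t) \<or>
    inj_on (\<lambda>p. p ! t) (block m j ` L)"
  proof cases
    case 1
    have "p ! t = p' ! t" if pp': "p \<in> block m j ` L" "p' \<in> block m j ` L" for p p'
    proof -
      obtain q q' where "q \<in> L" "q' \<in> L" "p = block m j q" "p' = block m j q'"
        using pp' by blast
      then show ?thesis using 1 t by (metis nth_block)
    qed
    then show ?thesis by blast
  next
    case 2
    then show ?thesis using inj_on_imageI[of "\<lambda>p. p ! t" "block m j" L] unfolding coord by blast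
  qed
qed

section \<open>Combinatorial lines and the maps \<eta>^+\<close>

lemma length_line_pt [simp]: "length (line_pt n M g a) = n"
  by (simp add: line_pt_def)

lemma nth_line_pt [simp]: "i < n \<Longrightarrow> line_pt n M g a ! i = (if i \<in> M then a else g i)"
  by (simp add: line_pt_def)

lemma line_pt_cong: "(\<And>i. i < n \<Longrightarrow> i \<notin> M \<Longrightarrow> g i = g' i) \<Longrightarrow> line_pt n M g = line_pt n M g'"
  unfolding line_pt_def by (rule ext) auto

lemma line_rep_eq_if_two_common_points:
  assumes U: "line_rep B n M g U" and U': "line_rep B n M' g' U'"
    and uv: "u \<in> U \<inter> U'" "v \<in> U \<inter> U'" "u \<noteq> v"
  shows "U = U'"
proof -
  obtain a b where ab: "u = line_pt n M g a" "v = line_pt n M g b"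
    using U uv unfolding line_rep_def by auto
  obtain a' b' where ab': "u = line_pt n M' g' a'" "v = line_pt n M' g' b'"
    using U' uv unfolding line_rep_def by auto
  have "a \<noteq> b" "a' \<noteq> b'" using ab ab' uv by auto
  have "i \<in> M \<longleftrightarrow> u ! i \<noteq> v ! i" if "i < n" for i
    using ab \<open>a \<noteq> b\<close> that by auto
  moreover have "i \<in> M' \<longleftrightarrow> u ! i \<noteq> v ! i" if "i < n" for i
    using ab' \<open>a' \<noteq> b'\<close> that by auto
  moreover have "M \<subseteq> {..<n}" "M' \<subseteq> {..<n}" using U U' unfolding line_rep_def by auto
  ultimately have "M = M'" by (metis subset_eq lessThan_iff set_eqI)
  have "g i = g' i" if "i < n" "i \<notin> M" for i
  proof -
    have "u ! i = g i" using ab(1) that by simp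
    moreover have "u ! i = g' i" using ab'(1) that \<open>M = M'\<close> by simp
    ultimately show ?thesis by simp
  qed
  then have "line_pt n M g = line_pt n M' g'" using \<open>M = M'\<close> by (auto intro: line_pt_cong)
  moreover have "U = line_pt n M g ` B" "U' = line_pt n M' g' ` B"
    using U U' unfolding line_rep_def by blast+
  ultimately show ?thesis by simp
qed

lemma length_eta_plus:
  assumes "length a = m" "\<forall>i<n. i \<notin> M \<longrightarrow> length (g i) = m"
  shows "length (eta_plus n M g a) = m * n"
  unfolding eta_plus_def using assms
  by (subst length_concat_const[where m = m]) (auto simp: line_pt_def)

lemma block_eta_plus:
  assumes "length a = m" "\<forall>i<n. i \<notin> M \<longrightarrow> length (g i) = m" "j < n"
  shows "block m j (eta_plus n M g a) = (if j \<in> M then a else g j)"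
  unfolding eta_plus_def using assms
  by (subst block_concat[where m = m]) (auto simp: line_pt_def)

lemma eta_plus_in_cube:
  assumes "a \<in> cube B m" "\<forall>i<n. i \<notin> M \<longrightarrow> g i \<in> cube B m"
  shows "eta_plus n M g a \<in> cube B (m * n)"
proof -
  have "length (eta_plus n M g a) = m * n"
    using assms by (intro length_eta_plus) (auto simp: cube_def)
  moreover have "set (eta_plus n M g a) \<subseteq> B"
    using assms by (auto simp: eta_plus_def line_pt_def cube_def)
  ultimately show ?thesis by (simp add: cube_def)
qed

lemma eta_plus_line_pt:
  assumes g: "\<forall>i<n. i \<notin> M \<longrightarrow> length (g i) = m"
  shows "eta_plus n M g (line_pt m M' g' c) =
    line_pt (m * n) {i. i < m * n \<and> i div m \<in> M \<and> i mod m \<in> M'}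
      (\<lambda>i. if i div m \<in> M then g' (i mod m) else g (i div m) ! (i mod m)) c"
proof (rule blocks_eqI[where m = m and n = n])
  show "length (eta_plus n M g (line_pt m M' g' c)) = m * n"
    using g by (intro length_eta_plus) auto
  fix j assume j: "j < n"
  show "block m j (eta_plus n M g (line_pt m M' g' c)) = block m j (line_pt (m * n)
      {i. i < m * n \<and> i div m \<in> M \<and> i mod m \<in> M'}
      (\<lambda>i. if i div m \<in> M then g' (i mod m) else g (i div m) ! (i mod m)) c)"
    using g j by (subst block_eta_plus) (auto intro!: nth_equalityI simp: block_index_less)
qed simp

lemma comb_line_image_eta_plus:
  assumes L: "comb_line B m L" and M: "M \<subseteq> {..<n}" "M \<noteq> {}"
    and g: "\<forall>i<n. i \<notin> M \<longrightarrow> g i \<in> cube B m"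
  shows "comb_line B (m * n) (eta_plus n M g ` L)"
proof -
  obtain M' g' where L': "line_rep B m M' g' L" using L unfolding comb_line_def by blast
  define M'' where "M'' = {i. i < m * n \<and> i div m \<in> M \<and> i mod m \<in> M'}"
  define g'' where "g'' i = (if i div m \<in> M then g' (i mod m) else g (i div m) ! (i mod m))" for i
  have "line_rep B (m * n) M'' g'' (eta_plus n M g ` L)"
    unfolding line_rep_def
  proof (intro conjI ballI)
    show "M'' \<subseteq> {..<m * n}" by (auto simp: M''_def)
    obtain j t where "j \<in> M" "t \<in> M'" using M L' unfolding line_rep_def by blast
    then have "j * m + t \<in> M''"
      using M L' block_index_less[of j n t m] unfolding line_rep_def M''_def by auto
    then show "M'' \<noteq> {}" by blast
  next
    fix i assume i: "i \<in> {..<m * n} - M''"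
    then have "m > 0" by (cases m) auto
    then have "i div m < n" "i mod m < m"
      using i by (auto simp: less_mult_imp_div_less mult.commute)
    show "g'' i \<in> B"
    proof (cases "i div m \<in> M")
      case True
      then have "i mod m \<notin> M'" using i by (simp add: M''_def)
      then show ?thesis
        using True L' \<open>i mod m < m\<close> by (simp add: g''_def line_rep_def)
    next
      case False
      then have "g (i div m) \<in> cube B m" using g \<open>i div m < n\<close> by blast
      then have "g (i div m) ! (i mod m) \<in> set (g (i div m))" "set (g (i div m)) \<subseteq> B"
        using \<open>i mod m < m\<close> by (simp_all add: cube_def)
      then show ?thesis using False by (auto simp: g''_def)
    qed
  next
    have "eta_plus n M g ` L = (\<lambda>c. eta_plus n M g (line_pt m M' g' c)) ` B"
      using L' unfolding line_rep_def by auto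
    also have "\<dots> = line_pt (m * n) M'' g'' ` B"
      using g eta_plus_line_pt[of n M g m M' g'] unfolding M''_def g''_def cube_def by auto
    finally show "eta_plus n M g ` L = line_pt (m * n) M'' g'' ` B" .
  qed
  then show ?thesis unfolding comb_line_def by blast
qed

lemma picture_quasiline:
  assumes "picture k V E m P psi" "quasiline k m L" "L \<subseteq> P"
  shows "comb_line {1..k} m L" "psi ` L \<in> E"
proof -
  have "\<forall>L. quasiline k m L \<and> L \<subseteq> P \<longrightarrow> comb_line {1..k} m L \<and> psi ` L \<in> E"
    using assms(1) by (simp add: picture_def)
  then show "comb_line {1..k} m L" "psi ` L \<in> E" using assms(2,3) by blast+
qed

lemma inj_on_picture_quasiline:
  assumes "uniform_hypergraph k V E" "picture k V E m P psi" "quasiline k m L" "L \<subseteq> P"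
  shows "inj_on psi L"
proof -
  have "card (psi ` L) = k"
    using assms(1) picture_quasiline(2)[OF assms(2-4)] unfolding uniform_hypergraph_def by blast
  moreover have "card L = k" using assms(3) by (simp add: quasiline_def)
  ultimately show ?thesis using inj_on_iff_eq_card[OF finite_quasiline[OF assms(3)], of psi] by simp
qed

lemma not_K4minus_free_three_edges:
  assumes "uniform_hypergraph 3 V E" "{x, b, c} \<in> E" "{a, x, c} \<in> E" "{a, b, x} \<in> E"
  shows "\<not> K4minus_free E"
proof -
  have "card {x, b, c} = 3" "card {a, x, c} = 3" "card {a, b, x} = 3"
    using assms(1) assms(2-4) unfolding uniform_hypergraph_def by blast+
  then have distinct: "x \<noteq> a" "x \<noteq> b" "x \<noteq> c" "a \<noteq> b" "a \<noteq> c" "b \<noteq> c"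
    by (auto simp: card_insert_if split: if_splits)
  define S where "S = {x, a, b, c}"
  have sub: "{{x, b, c}, {a, x, c}, {a, b, x}} \<subseteq> {e \<in> E. e \<subseteq> S}"
    using assms(2-4) unfolding S_def by auto
  have fin: "finite {e \<in> E. e \<subseteq> S}"
    by (rule finite_subset[of _ "Pow S"]) (auto simp: S_def)
  have "{x, b, c} \<noteq> {a, x, c}" "{x, b, c} \<noteq> {a, b, x}" "{a, x, c} \<noteq> {a, b, x}"
    using distinct by (auto simp: set_eq_iff)
  then have "card {{x, b, c}, {a, x, c}, {a, b, x}} = 3" by simp
  then have "3 \<le> card {e \<in> E. e \<subseteq> S}" using card_mono[OF fin sub] by simp
  moreover have "card S = 4" using distinct by (simp add: S_def)
  ultimately show ?thesis unfolding K4minus_free_def by blast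
qed

section \<open>The amalgamation\<close>

locale amalgamation =
  fixes k m n :: nat and V :: "'v set" and E :: "'v set set"
    and P :: "nat list set" and psi :: "nat list \<Rightarrow> 'v" and x :: 'v
    and \<L> :: "nat list list set set"
    and Mr :: "nat list list set \<Rightarrow> nat set" and gr :: "nat list list set \<Rightarrow> nat \<Rightarrow> nat list"
  assumes k_ge_3: "k \<ge> 3"
    and uniform: "uniform_hypergraph k V E"
    and K4_minus_free: "k = 3 \<Longrightarrow> K4minus_free E"
    and picture: "picture k V E m P psi"
    and line_reps: "\<forall>U\<in>\<L>. line_rep {p\<in>P. psi p = x} n (Mr U) (gr U) U"
    and tripod_free: "no_tripod \<L> Mr"
    and triangle_free: "no_triangle \<L>"
begin

abbreviation "Px \<equiv> {p\<in>P. psi p = x}"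
abbreviation "eta U \<equiv> eta_plus n (Mr U) (gr U)"
abbreviation "Q \<equiv> amalg_Q P n \<L> Mr gr"
abbreviation "psi\<Sigma> \<equiv> amalg_psi P psi n \<L> Mr gr"

lemma P_cube: "p \<in> P \<Longrightarrow> p \<in> cube {1..k} m"
  using picture by (auto simp: picture_def)

lemma length_P: "p \<in> P \<Longrightarrow> length p = m"
  using P_cube by (simp add: cube_def)

lemma line_rep_lines: "U \<in> \<L> \<Longrightarrow> line_rep Px n (Mr U) (gr U) U"
  using line_reps by blast

lemma moving_coords: "U \<in> \<L> \<Longrightarrow> Mr U \<subseteq> {..<n}" "U \<in> \<L> \<Longrightarrow> Mr U \<noteq> {}"
  using line_rep_lines by (simp_all add: line_rep_def)

lemma fixed_blocks: "U \<in> \<L> \<Longrightarrow> i < n \<Longrightarrow> i \<notin> Mr U \<Longrightarrow> gr U i \<in> Px"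
  using line_rep_lines by (simp add: line_rep_def)

lemma line_eq_image: "U \<in> \<L> \<Longrightarrow> U = line_pt n (Mr U) (gr U) ` Px"
  using line_rep_lines by (simp add: line_rep_def)

lemma tripod_freeD:
  assumes "U1 \<in> \<L>" "U2 \<in> \<L>" "U3 \<in> \<L>" "U1 \<noteq> U2" "U1 \<noteq> U3" "U2 \<noteq> U3"
    "U1 \<inter> U2 \<inter> U3 \<noteq> {}" "Mr U1 = Mr U2 \<union> Mr U3" "Mr U2 \<inter> Mr U3 = {}"
  shows False
  using tripod_free assms unfolding no_tripod_def by blast

lemma triangle_freeD:
  assumes "U1 \<in> \<L>" "U2 \<in> \<L>" "U3 \<in> \<L>" "U1 \<noteq> U2" "U1 \<noteq> U3" "U2 \<noteq> U3"
    "U1 \<inter> U2 \<noteq> {}" "U1 \<inter> U3 \<noteq> {}" "U2 \<inter> U3 \<noteq> {}" "U1 \<inter> U2 \<inter> U3 = {}"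
  shows False
  using triangle_free assms unfolding no_triangle_def by blast

lemma block_eta:
  "U \<in> \<L> \<Longrightarrow> p \<in> P \<Longrightarrow> j < n \<Longrightarrow> block m j (eta U p) = (if j \<in> Mr U then p else gr U j)"
  using fixed_blocks length_P by (intro block_eta_plus) auto

lemma eta_in_cube: "U \<in> \<L> \<Longrightarrow> p \<in> P \<Longrightarrow> eta U p \<in> cube {1..k} (m * n)"
  using fixed_blocks P_cube by (intro eta_plus_in_cube) auto

lemma psi_eq_if_eta_eq:
  assumes U: "U \<in> \<L>" "U' \<in> \<L>" and p: "p \<in> P" "p' \<in> P" and eq: "eta U p = eta U' p'"
  shows "psi p = psi p'"
proof -
  have "p = p' \<or> psi p = x"
    if "U \<in> \<L>" "U' \<in> \<L>" "p \<in> P" "p' \<in> P" "eta U p = eta U' p'" for U U' p p'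
  proof -
    obtain j where j: "j \<in> Mr U" "j < n" using moving_coords[OF \<open>U \<in> \<L>\<close>] by blast
    then have "p = (if j \<in> Mr U' then p' else gr U' j)"
      using that block_eta[of U p j] block_eta[of U' p' j] by simp
    then show ?thesis using that j fixed_blocks[of U' j] by (cases "j \<in> Mr U'") auto
  qed
  from this[OF U p eq] this[OF U(2,1) p(2,1) eq[symmetric]] show ?thesis by auto
qed

lemma psi\<Sigma>_eta:
  assumes "U \<in> \<L>" "p \<in> P"
  shows "psi\<Sigma> (eta U p) = psi p"
  unfolding amalg_psi_def
proof (rule someI2)
  show "\<exists>U'\<in>\<L>. \<exists>p'\<in>P. eta U p = eta U' p' \<and> psi p = psi p'"
    using assms by blast
next
  fix v assume "\<exists>U'\<in>\<L>. \<exists>p'\<in>P. eta U p = eta U' p' \<and> v = psi p'"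
  then show "v = psi p" using assms psi_eq_if_eta_eq by metis
qed

lemma comb_line_and_edge_if_in_eta_image:
  assumes U: "U \<in> \<L>" and L: "quasiline k (m * n) L" "L \<subseteq> eta U ` P"
  shows "comb_line {1..k} (m * n) L \<and> psi\<Sigma> ` L \<in> E"
proof -
  obtain j where j: "j \<in> Mr U" "j < n" using moving_coords[OF U] by blast
  have inv: "block m j q \<in> P \<and> eta U (block m j q) = q" if "q \<in> L" for q
    using L(2) that block_eta[OF U _ \<open>j < n\<close>] j(1) by auto
  define L' where "L' = block m j ` L"
  have "inj_on (block m j) L" by (rule inj_on_inverseI[where g = "eta U"]) (use inv in blast)
  then have "quasiline k m L'" unfolding L'_def using quasiline_block L j(2) by blast
  moreover have "L' \<subseteq> P" "L = eta U ` L'" using inv unfolding L'_def by (auto simp: image_image)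
  ultimately have "comb_line {1..k} m L'" "psi ` L' \<in> E"
    using picture_quasiline[OF picture] by auto
  moreover have "psi\<Sigma> ` L = psi ` L'"
    unfolding \<open>L = eta U ` L'\<close> image_image
    using \<open>L' \<subseteq> P\<close> psi\<Sigma>_eta[OF U] by (intro image_cong) auto
  moreover have "comb_line {1..k} (m * n) (eta U ` L')"
    using \<open>comb_line {1..k} m L'\<close> moving_coords[OF U] fixed_blocks[OF U] P_cube
    by (intro comb_line_image_eta_plus) auto
  ultimately show ?thesis using \<open>L = eta U ` L'\<close> by simp
qed

end

section \<open>A quasiline of the amalgamation lies in a single \<eta>_U[P]\<close>

locale amalgamation_quasiline = amalgamation +
  fixes L :: "nat list set"
    and Uq :: "nat list \<Rightarrow> nat list list set" and pq :: "nat list \<Rightarrow> nat list"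
  assumes quasiline: "quasiline k (m * n) L"
    and Uq_in: "q \<in> L \<Longrightarrow> Uq q \<in> \<L>"
    and pq_in: "q \<in> L \<Longrightarrow> pq q \<in> P"
    and eta_Uq_pq: "q \<in> L \<Longrightarrow> eta (Uq q) (pq q) = q"
begin

abbreviation "Mq q \<equiv> Mr (Uq q)"

lemma block_point: "q \<in> L \<Longrightarrow> j < n \<Longrightarrow> block m j q = (if j \<in> Mq q then pq q else gr (Uq q) j)"
  using block_eta[OF Uq_in pq_in] eta_Uq_pq by metis

lemma block_point_in_P: "q \<in> L \<Longrightarrow> j < n \<Longrightarrow> block m j q \<in> P"
  using block_point fixed_blocks[OF Uq_in] pq_in by auto

lemma psi_fixed_block: "q \<in> L \<Longrightarrow> j < n \<Longrightarrow> j \<notin> Mq q \<Longrightarrow> psi (block m j q) = x"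
  using block_point fixed_blocks[OF Uq_in] by auto

lemma Mq_less: "q \<in> L \<Longrightarrow> j \<in> Mq q \<Longrightarrow> j < n"
  using moving_coords(1)[OF Uq_in] by blast

definition line_point :: "nat list \<Rightarrow> nat list \<Rightarrow> nat list list" where
  "line_point q t = line_pt n (Mq q) (\<lambda>i. block m i q) t"

lemma length_line_point [simp]: "length (line_point q t) = n"
  by (simp add: line_point_def)

lemma line_point_eqI:
  "(\<And>i. i < n \<Longrightarrow> line_point q t ! i = line_point q' t' ! i) \<Longrightarrow> line_point q t = line_point q' t'"
  by (rule nth_equalityI) simp_all

lemma nth_line_point: "i < n \<Longrightarrow> line_point q t ! i = (if i \<in> Mq q then t else block m i q)"
  by (simp add: line_point_def)

lemma Uq_eq_image: "q \<in> L \<Longrightarrow> Uq q = line_point q ` Px"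
proof -
  assume q: "q \<in> L"
  have "line_pt n (Mq q) (gr (Uq q)) = line_point q"
    unfolding line_point_def by (rule line_pt_cong) (simp add: block_point[OF q])
  then show ?thesis using line_eq_image[OF Uq_in[OF q]] by simp
qed

lemma line_point_in_Uq: "q \<in> L \<Longrightarrow> t \<in> Px \<Longrightarrow> line_point q t \<in> Uq q"
  using Uq_eq_image by blast

lemma card_L: "card L = k"
  using quasiline by (simp add: quasiline_def)

lemma ex_point_outside:
  assumes "finite F" "card F < k"
  shows "\<exists>q\<in>L. q \<notin> F"
proof (rule ccontr)
  assume "\<not> (\<exists>q\<in>L. q \<notin> F)"
  then have "card L \<le> card F" using assms(1) by (intro card_mono) auto
  then show False using card_L assms(2) by simp
qed

lemma ex_point_avoiding_two: "\<exists>q\<in>L. q \<noteq> a \<and> q \<noteq> b"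
proof -
  have "card {a, b} \<le> 2" by (simp add: card_insert_if)
  then show ?thesis using ex_point_outside[of "{a, b}"] k_ge_3 by auto
qed

lemma ex_point_avoiding_three: "k \<ge> 4 \<Longrightarrow> \<exists>q\<in>L. q \<noteq> a \<and> q \<noteq> b \<and> q \<noteq> c"
proof -
  assume "k \<ge> 4"
  have "card {a, b, c} \<le> 3" by (simp add: card_insert_if)
  then show ?thesis using ex_point_outside[of "{a, b, c}"] \<open>k \<ge> 4\<close> by auto
qed

definition varying_blocks :: "nat set" where
  "varying_blocks = {j. j < n \<and> inj_on (block m j) L}"

lemma varying_blocks_less: "j \<in> varying_blocks \<Longrightarrow> j < n"
  by (simp add: varying_blocks_def)

lemma block_inj: "j \<in> varying_blocks \<Longrightarrow> q \<in> L \<Longrightarrow> q' \<in> L \<Longrightarrow> block m j q = block m j q' \<Longrightarrow> q = q'"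
  unfolding varying_blocks_def inj_on_def by blast

lemma block_const: "j < n \<Longrightarrow> j \<notin> varying_blocks \<Longrightarrow> q \<in> L \<Longrightarrow> q' \<in> L \<Longrightarrow> block m j q = block m j q'"
  using quasiline_block_const_or_inj[OF quasiline] unfolding varying_blocks_def by blast

lemma block_image_quasiline:
  "j \<in> varying_blocks \<Longrightarrow> quasiline k m (block m j ` L) \<and> block m j ` L \<subseteq> P"
  using quasiline_block[OF quasiline] block_point_in_P unfolding varying_blocks_def by blast

lemma block_image_line:
  assumes "j \<in> varying_blocks"
  shows "comb_line {1..k} m (block m j ` L)" "psi ` block m j ` L \<in> E"
  using picture_quasiline[OF picture] block_image_quasiline[OF assms] by blast+

lemma fibre_point_unique:
  assumes j: "j \<in> varying_blocks" and q: "q \<in> L" "q' \<in> L"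
    and x: "psi (block m j q) = x" "psi (block m j q') = x"
  shows "q = q'"
proof -
  have "inj_on psi (block m j ` L)"
    using inj_on_picture_quasiline[OF uniform picture] block_image_quasiline[OF j] by blast
  then have "block m j q = block m j q'" using q x by (auto dest: inj_onD)
  then show ?thesis using block_inj[OF j q] by blast
qed

lemma varying_blocks_nonempty: "varying_blocks \<noteq> {}"
proof
  assume none: "varying_blocks = {}"
  obtain q where q: "q \<in> L" using ex_point_avoiding_two by blast
  obtain q' where q': "q' \<in> L" "q' \<noteq> q" using ex_point_avoiding_two by blast
  have "q = q'"
  proof (rule blocks_eqI[where m = m and n = n])
    show "length q = m * n" "length q' = m * n"
      using quasiline q q' by (auto simp: quasiline_def cube_def)
    show "block m j q = block m j q'" if "j < n" for j
      using block_const[OF that _ q q'(1)] none by blast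
  qed
  then show False using q' by blast
qed

lemma block_images_eq:
  assumes j: "j \<in> varying_blocks" "j' \<in> varying_blocks"
    and q: "q1 \<in> L" "q2 \<in> L" "q1 \<noteq> q2" and M: "{j, j'} \<subseteq> Mq q1" "{j, j'} \<subseteq> Mq q2"
  shows "block m j ` L = block m j' ` L"
proof -
  obtain M g M' g' where
    "line_rep {1..k} m M g (block m j ` L)" "line_rep {1..k} m M' g' (block m j' ` L)"
    using block_image_line(1)[OF j(1)] block_image_line(1)[OF j(2)] unfolding comb_line_def by blast
  moreover have "block m j q = block m j' q" if "q \<in> {q1, q2}" for q
  proof -
    have "q \<in> L" "{j, j'} \<subseteq> Mq q" using that q M by auto
    then show ?thesis
      using block_point varying_blocks_less[OF j(1)] varying_blocks_less[OF j(2)] by simp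
  qed
  then have "block m j q1 = block m j' q1" "block m j q2 = block m j' q2" by blast+
  then have "block m j q1 \<in> block m j ` L \<inter> block m j' ` L"
    "block m j q2 \<in> block m j ` L \<inter> block m j' ` L"
    using q by (metis IntI image_eqI)+
  moreover have "block m j q1 \<noteq> block m j q2" using block_inj[OF j(1)] q by blast
  ultimately show ?thesis by (intro line_rep_eq_if_two_common_points)
qed

lemma block_eq_if_fibre:
  assumes j: "j \<in> varying_blocks" "j' \<in> varying_blocks" and eq: "block m j ` L = block m j' ` L"
    and q: "q \<in> L" and x: "psi (block m j q) = x" "psi (block m j' q) = x"
  shows "block m j q = block m j' q"
proof -
  obtain q' where q': "q' \<in> L" "block m j q = block m j' q'" using eq q by blast
  then have "q' = q" using fibre_point_unique[OF j(2) q'(1) q] x by simp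
  then show ?thesis using q' by simp
qed

lemma Uq_eq_if_Mq_varying:
  assumes q: "q \<in> L" "q' \<in> L" and M: "Mq q = varying_blocks" "Mq q' = varying_blocks"
  shows "Uq q = Uq q'"
proof -
  have "line_point q = line_point q'"
    unfolding line_point_def M using block_const[OF _ _ q] by (intro line_pt_cong) blast
  then show ?thesis using Uq_eq_image q by simp
qed

lemma fibre_point_all_blocks:
  assumes "q0 \<in> L" "psi (pq q0) = x" "j < n"
  shows "psi (block m j q0) = x"
  using assms block_point[OF assms(1,3)] psi_fixed_block[OF assms(1,3)] by (cases "j \<in> Mq q0") auto

lemma Mq_eq_varying_if_fibre_point:
  assumes q0: "q0 \<in> L" "psi (pq q0) = x" and q: "q \<in> L" "q \<noteq> q0"
  shows "Mq q = varying_blocks"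
proof -
  have not_in_fibre: "psi (block m j q) \<noteq> x" if "j \<in> varying_blocks" for j
    using fibre_point_unique[OF that q(1) q0(1)] fibre_point_all_blocks[OF q0 varying_blocks_less[OF that]]
      q(2) by blast
  then have varying_moving: "varying_blocks \<subseteq> Mq q"
    using psi_fixed_block[OF q(1)] varying_blocks_less by blast
  obtain j where j: "j \<in> varying_blocks" using varying_blocks_nonempty by blast
  then have "block m j q = pq q"
    using block_point[OF q(1) varying_blocks_less[OF j]] varying_moving by auto
  then have "psi (pq q) \<noteq> x" using not_in_fibre[OF j] by simp
  moreover have "psi (pq q) = x" if "j \<in> Mq q" "j \<notin> varying_blocks" for j
  proof -
    have "j < n" using Mq_less q(1) that(1) by blast
    then have "pq q = block m j q0"
      using block_point[OF q(1)] block_const[OF _ that(2) q(1) q0(1)] that(1) by simp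
    then show ?thesis using fibre_point_all_blocks[OF q0 \<open>j < n\<close>] by simp
  qed
  ultimately show ?thesis using varying_moving by blast
qed

lemma fibre_point_in_eta_image:
  assumes q0: "q0 \<in> L" "psi (pq q0) = x" and q1: "q1 \<in> L" "q1 \<noteq> q0"
  shows "q0 \<in> eta (Uq q1) ` P"
proof -
  obtain q2 where q2: "q2 \<in> L" "q2 \<noteq> q0" "q2 \<noteq> q1" using ex_point_avoiding_two by blast
  define U where "U = Uq q1"
  have "U \<in> \<L>" using Uq_in[OF q1(1)] by (simp add: U_def)
  have MU: "Mr U = varying_blocks" "Mq q2 = varying_blocks"
    using Mq_eq_varying_if_fibre_point[OF q0] q1 q2 unfolding U_def by auto
  obtain j1 where j1: "j1 \<in> varying_blocks" using varying_blocks_nonempty by blast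
  define a where "a = block m j1 q0"
  have "a \<in> P" using block_point_in_P q0 varying_blocks_less[OF j1] unfolding a_def by blast
  have eta_a: "block m j (eta U a) = (if j \<in> varying_blocks then a else gr U j)" if "j < n" for j
    using block_eta[OF \<open>U \<in> \<L>\<close> \<open>a \<in> P\<close> that] MU(1) by simp
  have "q0 = eta U a"
  proof (rule blocks_eqI[where m = m and n = n])
    show "length q0 = m * n" "length (eta U a) = m * n"
      using quasiline q0(1) eta_in_cube[OF \<open>U \<in> \<L>\<close> \<open>a \<in> P\<close>] by (auto simp: quasiline_def cube_def)
    fix j assume j: "j < n"
    show "block m j q0 = block m j (eta U a)"
    proof (cases "j \<in> varying_blocks")
      case True
      have "block m j ` L = block m j1 ` L"
        using block_images_eq[OF True j1 q1(1) q2(1) q2(3)[symmetric]] MU j1 True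
        unfolding U_def by auto
      then have "block m j q0 = a"
        unfolding a_def using block_eq_if_fibre[OF True j1 _ q0(1)]
          fibre_point_all_blocks[OF q0 j] fibre_point_all_blocks[OF q0 varying_blocks_less[OF j1]]
        by blast
      then show ?thesis using eta_a[OF j] True by simp
    next
      case False
      then have "block m j q0 = gr U j"
        using block_const[OF j False q0(1) q1(1)] block_point[OF q1(1) j] MU by (simp add: U_def)
      then show ?thesis using eta_a[OF j] False by simp
    qed
  qed
  then show ?thesis using \<open>a \<in> P\<close> unfolding U_def by blast
qed

lemma single_eta_image_if_fibre_point:
  assumes q0: "q0 \<in> L" "psi (pq q0) = x"
  shows "\<exists>U\<in>\<L>. L \<subseteq> eta U ` P"
proof -
  obtain q1 where q1: "q1 \<in> L" "q1 \<noteq> q0" using ex_point_avoiding_two by blast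
  have "Uq q = Uq q1" if "q \<in> L" "q \<noteq> q0" for q
    using Mq_eq_varying_if_fibre_point[OF q0] that q1 by (intro Uq_eq_if_Mq_varying) auto
  then have "q \<in> eta (Uq q1) ` P" if "q \<in> L" "q \<noteq> q0" for q
    using that eta_Uq_pq pq_in by (metis image_eqI)
  moreover have "q0 \<in> eta (Uq q1) ` P" using fibre_point_in_eta_image[OF q0 q1] .
  ultimately show ?thesis using Uq_in[OF q1(1)] by blast
qed

end

locale amalgamation_quasiline_off_fibre = amalgamation_quasiline +
  assumes off_fibre: "q \<in> L \<Longrightarrow> psi (pq q) \<noteq> x"
begin

lemma psi_block_eq_x_iff: "q \<in> L \<Longrightarrow> j < n \<Longrightarrow> psi (block m j q) = x \<longleftrightarrow> j \<notin> Mq q"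
  using block_point psi_fixed_block off_fibre by (cases "j \<in> Mq q") auto

lemma block_moving: "q \<in> L \<Longrightarrow> j \<in> Mq q \<Longrightarrow> block m j q = pq q"
  using block_point Mq_less by simp

definition deficit :: "nat list \<Rightarrow> nat set" where
  "deficit q = varying_blocks - Mq q"

lemma deficit_unique: "q \<in> L \<Longrightarrow> q' \<in> L \<Longrightarrow> j \<in> deficit q \<Longrightarrow> j \<in> deficit q' \<Longrightarrow> q = q'"
  unfolding deficit_def using fibre_point_unique psi_block_eq_x_iff varying_blocks_less by blast

lemma moving_at_two_points:
  assumes j: "j \<in> varying_blocks"
  shows "\<exists>a\<in>L. \<exists>b\<in>L. a \<noteq> b \<and> j \<in> Mq a \<and> j \<in> Mq b"
proof -
  obtain a where a: "a \<in> L" using ex_point_avoiding_two by blast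
  obtain b where b: "b \<in> L" "b \<noteq> a" using ex_point_avoiding_two by blast
  obtain c where c: "c \<in> L" "c \<noteq> a" "c \<noteq> b" using ex_point_avoiding_two by blast
  have "j \<in> Mq q \<or> j \<in> Mq q'" if "q \<in> L" "q' \<in> L" "q \<noteq> q'" for q q'
    using deficit_unique[OF that(1,2)] that(3) j unfolding deficit_def by blast
  then show ?thesis using a b c by metis
qed

lemma Mq_subset_varying: "q \<in> L \<Longrightarrow> Mq q \<subseteq> varying_blocks"
proof
  fix j assume q: "q \<in> L" and j: "j \<in> Mq q"
  show "j \<in> varying_blocks"
  proof (rule ccontr)
    assume const: "j \<notin> varying_blocks"
    have same: "block m j q' = pq q" if "q' \<in> L" for q'
      using block_const[OF Mq_less[OF q j] const that q] block_moving[OF q j] by simp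
    have pq_const: "pq q' = pq q" if "q' \<in> L" for q'
    proof -
      have "j \<in> Mq q'"
        using psi_block_eq_x_iff[OF that Mq_less[OF q j]] same[OF that] off_fibre[OF q] by simp
      then show ?thesis using block_moving[OF that] same[OF that] by simp
    qed
    obtain j1 where j1: "j1 \<in> varying_blocks" using varying_blocks_nonempty by blast
    obtain a b where ab: "a \<in> L" "b \<in> L" "a \<noteq> b" "j1 \<in> Mq a" "j1 \<in> Mq b"
      using moving_at_two_points[OF j1] by blast
    then have "block m j1 a = block m j1 b" using block_moving pq_const by simp
    then show False using block_inj[OF j1] ab by blast
  qed
qed

lemma Mq_eq_varying_iff: "q \<in> L \<Longrightarrow> Mq q = varying_blocks \<longleftrightarrow> deficit q = {}"
  using Mq_subset_varying unfolding deficit_def by blast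

lemma moving_off_deficit_point:
  "q \<in> L \<Longrightarrow> q' \<in> L \<Longrightarrow> q' \<noteq> q \<Longrightarrow> j \<in> deficit q \<Longrightarrow> j \<in> Mq q'"
  using deficit_unique[of q q' j] unfolding deficit_def by blast

lemma block_deficit_const:
  assumes q: "q \<in> L" and j: "j \<in> deficit q" "j' \<in> deficit q"
  shows "block m j q = block m j' q"
proof -
  have jv: "j \<in> varying_blocks" "j' \<in> varying_blocks" using j by (auto simp: deficit_def)
  obtain b where b: "b \<in> L" "b \<noteq> q" using ex_point_avoiding_two by blast
  obtain c where c: "c \<in> L" "c \<noteq> q" "c \<noteq> b" using ex_point_avoiding_two by blast
  have "{j, j'} \<subseteq> Mq b" "{j, j'} \<subseteq> Mq c"
    using moving_off_deficit_point[OF q] b c j by auto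
  then have "block m j ` L = block m j' ` L"
    using block_images_eq[OF jv b(1) c(1) c(3)[symmetric]] by blast
  moreover have "psi (block m j q) = x" "psi (block m j' q) = x"
    using psi_block_eq_x_iff[OF q] varying_blocks_less j jv by (auto simp: deficit_def)
  ultimately show ?thesis using block_eq_if_fibre[OF jv _ q] by blast
qed

lemma deficit_block_in_fibre: "q \<in> L \<Longrightarrow> j \<in> deficit q \<Longrightarrow> block m j q \<in> Px"
  using block_point_in_P psi_fixed_block varying_blocks_less by (simp add: deficit_def)

lemma deficits_cover:
  assumes q1: "q1 \<in> L" "j1 \<in> deficit q1" and j: "j \<in> varying_blocks"
  shows "\<exists>q\<in>L. j \<in> deficit q"
proof (rule ccontr)
  assume "\<not> (\<exists>q\<in>L. j \<in> deficit q)"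
  then have moving: "j \<in> Mq q" if "q \<in> L" for q using that j unfolding deficit_def by blast
  have j1: "j1 \<in> varying_blocks" using q1 by (simp add: deficit_def)
  obtain b where b: "b \<in> L" "b \<noteq> q1" using ex_point_avoiding_two by blast
  obtain c where c: "c \<in> L" "c \<noteq> q1" "c \<noteq> b" using ex_point_avoiding_two by blast
  have "j1 \<in> Mq b" "j1 \<in> Mq c"
    using moving_off_deficit_point[OF q1(1) _ _ q1(2)] b c by blast+
  then have "block m j1 ` L = block m j ` L"
    using block_images_eq[OF j1 j b(1) c(1) c(3)[symmetric]] moving b(1) c(1) by blast
  then have "block m j1 q1 \<in> block m j ` L" using q1(1) by (metis imageI)
  then obtain q where q: "q \<in> L" "block m j q = block m j1 q1" by (metis imageE)
  have "psi (block m j1 q1) = x"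
    using psi_block_eq_x_iff[OF q1(1) varying_blocks_less[OF j1]] q1(2) by (simp add: deficit_def)
  moreover have "psi (block m j q) \<noteq> x"
    using psi_block_eq_x_iff[OF q(1) varying_blocks_less[OF j]] moving[OF q(1)] by simp
  ultimately show False using q(2) by simp
qed

lemma psi_block_deficit:
  "q \<in> L \<Longrightarrow> j \<in> deficit q \<Longrightarrow> q' \<in> L \<Longrightarrow> psi (block m j q') = (if q' = q then x else psi (pq q'))"
  using psi_block_eq_x_iff[of q' j] moving_off_deficit_point[of q q' j] block_moving[of q' j]
    varying_blocks_less by (auto simp: deficit_def)

lemma three_deficits_impossible_k3:
  assumes "k = 3" and q: "q1 \<in> L" "q2 \<in> L" "q3 \<in> L" "q1 \<noteq> q2" "q1 \<noteq> q3" "q2 \<noteq> q3"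
    and j: "j1 \<in> deficit q1" "j2 \<in> deficit q2" "j3 \<in> deficit q3"
  shows False
proof -
  have L: "L = {q1, q2, q3}"
    using card_subset_eq[OF finite_quasiline[OF quasiline], of "{q1, q2, q3}"] card_L \<open>k = 3\<close> q
    by simp
  have edge: "{psi (block m j q1), psi (block m j q2), psi (block m j q3)} \<in> E"
    if "j \<in> deficit q" for j q
  proof -
    have "psi ` block m j ` L \<in> E" using block_image_line(2) that by (simp add: deficit_def)
    then show ?thesis by (simp add: L)
  qed
  have "{x, psi (pq q2), psi (pq q3)} \<in> E"
    using edge[OF j(1)] psi_block_deficit[OF q(1) j(1)] q by simp
  moreover have "{psi (pq q1), x, psi (pq q3)} \<in> E"
    using edge[OF j(2)] psi_block_deficit[OF q(2) j(2)] q by simp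
  moreover have "{psi (pq q1), psi (pq q2), x} \<in> E"
    using edge[OF j(3)] psi_block_deficit[OF q(3) j(3)] q by simp
  ultimately have "\<not> K4minus_free E"
    using uniform \<open>k = 3\<close> not_K4minus_free_three_edges[where a = "psi (pq q1)" and
        b = "psi (pq q2)" and c = "psi (pq q3)"] by auto
  then show False using K4_minus_free \<open>k = 3\<close> by blast
qed

text \<open>The block lines of j1 and j2 coincide, so p_{q1} is block j1 of some q' \<noteq> q1; then
  q' and q1 have equal p_q and a common moving block.\<close>

lemma three_deficits_impossible_k4:
  assumes "k \<ge> 4" and q: "q1 \<in> L" "q2 \<in> L" "q3 \<in> L" "q1 \<noteq> q2" "q1 \<noteq> q3" "q2 \<noteq> q3"
    and j: "j1 \<in> deficit q1" "j2 \<in> deficit q2" "j3 \<in> deficit q3"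
  shows False
proof -
  have jv: "j1 \<in> varying_blocks" "j2 \<in> varying_blocks" "j3 \<in> varying_blocks"
    using j by (auto simp: deficit_def)
  have moving: "j \<in> Mq q'" if "j \<in> deficit q" "q \<in> L" "q' \<in> L" "q' \<noteq> q" for j q q'
    using moving_off_deficit_point that by blast
  obtain qa where qa: "qa \<in> L" "qa \<noteq> q1" "qa \<noteq> q2" using ex_point_avoiding_two by blast
  obtain qb where qb: "qb \<in> L" "qb \<noteq> q1" "qb \<noteq> q2" "qb \<noteq> qa"
    using ex_point_avoiding_three[OF \<open>k \<ge> 4\<close>] by blast
  have "{j2, j1} \<subseteq> Mq qa" "{j2, j1} \<subseteq> Mq qb"
    using moving[OF j(1) q(1)] moving[OF j(2) q(2)] qa qb by auto
  then have "block m j2 ` L = block m j1 ` L"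
    using block_images_eq[OF jv(2,1) qa(1) qb(1) qb(4)[symmetric]] by blast
  moreover have "pq q1 = block m j2 q1"
    using block_moving[OF q(1) moving[OF j(2) q(2,1) q(4)]] by simp
  ultimately obtain q' where q': "q' \<in> L" "block m j1 q' = pq q1"
    using q(1) by (metis imageE imageI)
  have "psi (block m j1 q1) = x" using psi_block_deficit[OF q(1) j(1) q(1)] by simp
  then have "q' \<noteq> q1" using q'(2) off_fibre[OF q(1)] by auto
  then have "pq q' = pq q1" using block_moving[OF q'(1)] moving[OF j(1) q(1) q'(1)] q' by simp
  obtain j' where "j' \<in> varying_blocks" "j' \<in> Mq q1" "j' \<in> Mq q'"
  proof (cases "q' = q2")
    case True
    then show ?thesis using that jv(3) moving[OF j(3) q(3)] q by auto
  next
    case False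
    then show ?thesis using that jv(2) moving[OF j(2) q(2)] q q' by auto
  qed
  then have "block m j' q' = block m j' q1" using block_moving q(1) q'(1) \<open>pq q' = pq q1\<close> by simp
  then show False using block_inj \<open>j' \<in> varying_blocks\<close> q(1) q'(1) \<open>q' \<noteq> q1\<close> by blast
qed

lemma two_deficits_Mq:
  assumes q: "q1 \<in> L" "q2 \<in> L" "q1 \<noteq> q2" and j1: "j1 \<in> deficit q1"
    and others: "\<forall>q\<in>L - {q1, q2}. deficit q = {}"
  shows "varying_blocks = deficit q1 \<union> deficit q2" "deficit q1 \<inter> deficit q2 = {}"
    "Mq q1 = deficit q2" "Mq q2 = deficit q1"
proof -
  have "varying_blocks \<subseteq> deficit q1 \<union> deficit q2"
  proof
    fix j assume "j \<in> varying_blocks"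
    then obtain q where "q \<in> L" "j \<in> deficit q" using deficits_cover[OF q(1) j1] by blast
    then show "j \<in> deficit q1 \<union> deficit q2" using others by blast
  qed
  then show cover: "varying_blocks = deficit q1 \<union> deficit q2" by (auto simp: deficit_def)
  show disj: "deficit q1 \<inter> deficit q2 = {}" using deficit_unique q by blast
  have "Mq q1 \<subseteq> varying_blocks" "Mq q2 \<subseteq> varying_blocks"
    using Mq_subset_varying q by blast+
  then show "Mq q1 = deficit q2" "Mq q2 = deficit q1"
    using cover disj unfolding deficit_def by blast+
qed

lemma two_deficits_line_points:
  assumes q: "q1 \<in> L" "q2 \<in> L" "q3 \<in> L" "q1 \<noteq> q2" "q3 \<noteq> q1" "q3 \<noteq> q2"
    and j1: "j1 \<in> deficit q1"
    and others: "\<forall>q\<in>L - {q1, q2}. deficit q = {}"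
    and a1: "\<forall>i\<in>deficit q1. block m i q1 = a1" and a2: "\<forall>i\<in>deficit q2. block m i q2 = a2"
  shows "line_point q1 a1 = line_point q3 a1" "line_point q2 a2 = line_point q3 a2"
    "line_point q1 a2 = line_point q2 a1"
proof -
  note M = two_deficits_Mq[OF q(1,2,4) j1 others]
  have M3: "Mq q3 = varying_blocks" using Mq_eq_varying_iff[OF q(3)] others q(3,5,6) by blast
  have const: "block m i q = block m i q3" if "q \<in> L" "i < n" "i \<notin> varying_blocks" for q i
    using block_const that q(3) by blast
  show "line_point q1 a1 = line_point q3 a1" "line_point q2 a2 = line_point q3 a2"
    "line_point q1 a2 = line_point q2 a1"
    using M M3 a1 a2 const[OF q(1)] const[OF q(2)]
    by (auto simp: nth_line_point intro!: line_point_eqI)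
qed

lemma two_deficits_common_point:
  assumes q: "q1 \<in> L" "q2 \<in> L" "q3 \<in> L" "q1 \<noteq> q2"
    and j: "j1 \<in> deficit q1" "j2 \<in> deficit q2" and M3: "Mq q3 = varying_blocks"
    and y: "y \<in> Uq q1 \<inter> Uq q2 \<inter> Uq q3"
  shows "block m j1 q1 = block m j2 q2"
proof -
  have "y \<in> line_point q1 ` Px" "y \<in> line_point q2 ` Px" "y \<in> line_point q3 ` Px"
    using y Uq_eq_image[OF q(1)] Uq_eq_image[OF q(2)] Uq_eq_image[OF q(3)] by auto
  then obtain t1 t2 s
    where y_eq: "y = line_point q1 t1" "y = line_point q2 t2" "y = line_point q3 s"
    by blast
  have "j1 < n" "j2 < n" using j varying_blocks_less by (auto simp: deficit_def)
  have "j1 \<notin> Mq q1" "j2 \<notin> Mq q2" "j1 \<in> Mq q3" "j2 \<in> Mq q3" using j M3 by (auto simp: deficit_def)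
  then have "line_point q1 t1 ! j1 = block m j1 q1" "line_point q3 s ! j1 = s"
    "line_point q2 t2 ! j2 = block m j2 q2" "line_point q3 s ! j2 = s"
    using \<open>j1 < n\<close> \<open>j2 < n\<close> by (simp_all add: nth_line_point)
  then show ?thesis using y_eq by metis
qed

text \<open>The lines U_{q1}, U_{q2}, U_{q3} have moving sets D2, D1 and D1 \<union> D2, where Di is the
  deficit of qi: they form a tripod if the constant blocks a1, a2 of q1 on D1 and of q2 on D2
  agree, and a triangle otherwise.\<close>

lemma two_deficits_impossible:
  assumes q: "q1 \<in> L" "q2 \<in> L" "q1 \<noteq> q2" and j: "j1 \<in> deficit q1" "j2 \<in> deficit q2"
    and others: "\<forall>q\<in>L - {q1, q2}. deficit q = {}"
  shows False
proof -
  obtain q3 where q3: "q3 \<in> L" "q3 \<noteq> q1" "q3 \<noteq> q2" using ex_point_avoiding_two by blast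
  define a1 a2 where "a1 = block m j1 q1" and "a2 = block m j2 q2"
  note M = two_deficits_Mq[OF q j(1) others]
  have M3: "Mq q3 = varying_blocks" using Mq_eq_varying_iff[OF q3(1)] others q3 by blast
  have j_Mq: "j1 \<notin> Mq q1" "j2 \<notin> Mq q2" "j1 \<in> Mq q2" "j1 \<in> Mq q3" "j2 \<in> Mq q3"
    using j M(4) M3 by (simp_all add: deficit_def)
  have "a1 \<in> Px" "a2 \<in> Px" unfolding a1_def a2_def using deficit_block_in_fibre q j by blast+
  have a1: "\<forall>i\<in>deficit q1. block m i q1 = a1"
    unfolding a1_def using block_deficit_const[OF q(1) _ j(1)] by blast
  have a2: "\<forall>i\<in>deficit q2. block m i q2 = a2"
    unfolding a2_def using block_deficit_const[OF q(2) _ j(2)] by blast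
  note pts = two_deficits_line_points[OF q(1,2) q3(1) q(3) q3(2,3) j(1) others a1 a2]
  have distinct: "Uq q1 \<noteq> Uq q2" "Uq q3 \<noteq> Uq q1" "Uq q3 \<noteq> Uq q2"
    using j_Mq by metis+
  have Mr: "Mq q3 = Mq q1 \<union> Mq q2" "Mq q1 \<inter> Mq q2 = {}"
    using M M3 by auto
  have in_Uq: "line_point q1 a1 \<in> Uq q1" "line_point q1 a2 \<in> Uq q1" "line_point q2 a1 \<in> Uq q2"
    "line_point q2 a2 \<in> Uq q2" "line_point q3 a1 \<in> Uq q3" "line_point q3 a2 \<in> Uq q3"
    using line_point_in_Uq q q3 \<open>a1 \<in> Px\<close> \<open>a2 \<in> Px\<close> by blast+
  show False
  proof (cases "a1 = a2")
    case True
    then have "line_point q3 a1 \<in> Uq q3 \<inter> Uq q1 \<inter> Uq q2" using pts in_Uq by simp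
    then show False
      using tripod_freeD[OF Uq_in[OF q3(1)] Uq_in[OF q(1)] Uq_in[OF q(2)]] distinct Mr by blast
  next
    case False
    then have "Uq q1 \<inter> Uq q2 \<inter> Uq q3 = {}"
      using two_deficits_common_point[OF q(1,2) q3(1) q(3) j M3] unfolding a1_def a2_def by blast
    moreover have "line_point q1 a2 \<in> Uq q1 \<inter> Uq q2" "line_point q1 a1 \<in> Uq q1 \<inter> Uq q3"
      "line_point q2 a2 \<in> Uq q2 \<inter> Uq q3"
      using pts in_Uq by (metis IntI)+
    ultimately show False
      using triangle_freeD[OF Uq_in[OF q(1)] Uq_in[OF q(2)] Uq_in[OF q3(1)]] distinct by blast
  qed
qed

lemma single_eta_image_off_fibre: "\<exists>U\<in>\<L>. L \<subseteq> eta U ` P"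
proof (cases "\<forall>q\<in>L. deficit q = {}")
  case True
  obtain q1 where q1: "q1 \<in> L" using ex_point_avoiding_two by blast
  have "Uq q = Uq q1" if "q \<in> L" for q
    using Uq_eq_if_Mq_varying Mq_eq_varying_iff True q1 that by blast
  then have "L \<subseteq> eta (Uq q1) ` P" using eta_Uq_pq pq_in by (metis image_eqI subsetI)
  then show ?thesis using Uq_in[OF q1] by blast
next
  case False
  then obtain q1 j1 where q1: "q1 \<in> L" "j1 \<in> deficit q1" by blast
  obtain j2 where "j2 \<in> Mq q1" using moving_coords(2)[OF Uq_in[OF q1(1)]] by blast
  then have "j2 \<in> varying_blocks" "j2 \<notin> deficit q1"
    using Mq_subset_varying[OF q1(1)] by (auto simp: deficit_def)
  then obtain q2 where q2: "q2 \<in> L" "j2 \<in> deficit q2" "q2 \<noteq> q1"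
    using deficits_cover[OF q1] by blast
  show ?thesis
  proof (cases "\<exists>q3\<in>L. q3 \<noteq> q1 \<and> q3 \<noteq> q2 \<and> deficit q3 \<noteq> {}")
    case True
    then obtain q3 j3 where "q3 \<in> L" "q3 \<noteq> q1" "q3 \<noteq> q2" "j3 \<in> deficit q3" by blast
    moreover consider "k = 3" | "k \<ge> 4" using k_ge_3 by linarith
    ultimately show ?thesis
      using three_deficits_impossible_k3 three_deficits_impossible_k4 q1 q2 by metis
  next
    case False
    then show ?thesis
      using two_deficits_impossible[OF q1(1) q2(1) q2(3)[symmetric] q1(2) q2(2)] by blast
  qed
qed

end

context amalgamation_quasiline
begin

lemma single_eta_image: "\<exists>U\<in>\<L>. L \<subseteq> eta U ` P"
proof (cases "\<exists>q0\<in>L. psi (pq q0) = x")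
  case True
  then show ?thesis using single_eta_image_if_fibre_point by blast
next
  case False
  interpret amalgamation_quasiline_off_fibre k m n V E P psi x \<L> Mr gr L Uq pq
    using False by unfold_locales blast
  show ?thesis by (rule single_eta_image_off_fibre)
qed

end

context amalgamation
begin

lemma picture_amalgamation: "picture k V E (m * n) Q psi\<Sigma>"
  unfolding picture_def
proof (intro conjI ballI allI impI)
  show "Q \<subseteq> cube {1..k} (m * n)" using eta_in_cube by (auto simp: amalg_Q_def)
  show "psi\<Sigma> q \<in> V" if "q \<in> Q" for q
    using that psi\<Sigma>_eta picture by (auto simp: amalg_Q_def picture_def)
next
  fix L assume L: "quasiline k (m * n) L \<and> L \<subseteq> Q"
  then have "\<forall>q\<in>L. \<exists>U p. U \<in> \<L> \<and> p \<in> P \<and> eta U p = q" unfolding amalg_Q_def by blast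
  then obtain Uq pq where "\<forall>q\<in>L. Uq q \<in> \<L> \<and> pq q \<in> P \<and> eta (Uq q) (pq q) = q" by metis
  then interpret amalgamation_quasiline k m n V E P psi x \<L> Mr gr L Uq pq
    using L by unfold_locales auto
  obtain U where "U \<in> \<L>" "L \<subseteq> eta U ` P" using single_eta_image by blast
  then show "comb_line {1..k} (m * n) L" "psi\<Sigma> ` L \<in> E"
    using comb_line_and_edge_if_in_eta_image L by blast+
qed

end

theorem proposition4p5:
  fixes k m n :: nat and V :: "'v set" and E :: "'v set set"
    and P :: "nat list set" and psi :: "nat list \<Rightarrow> 'v" and x :: 'v
    and \<L> :: "nat list list set set"
    and Mr :: "nat list list set \<Rightarrow> nat set" and gr :: "nat list list set \<Rightarrow> nat \<Rightarrow> nat list"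
  assumes "k \<ge> 3"
    and "uniform_hypergraph k V E"
    and "k = 3 \<Longrightarrow> K4minus_free E"
    and "picture k V E m P psi"
    and "x \<in> V"
    and "n \<ge> 1"
    and "\<forall>U\<in>\<L>. line_rep {p\<in>P. psi p = x} n (Mr U) (gr U) U"
    and "no_tripod \<L> Mr"
    and "no_triangle \<L>"
  shows "picture k V E (m * n) (amalg_Q P n \<L> Mr gr) (amalg_psi P psi n \<L> Mr gr)"
proof -
  interpret amalgamation k m n V E P psi x \<L> Mr gr
    using assms by unfold_locales auto
  show ?thesis by (rule picture_amalgamation)
qed

end
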